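(* Let $1<q<\infty$, $\alpha,\beta\in\mathbb R$, and let $f\in\mathbb M^2\cap\mathbb W_q^{\alpha,\beta}$ be nonnegative on $[-1,1]$. Then $f^q\in\mathbb M^2\cap\mathbb W_1^{q\alpha,q\beta}$, and for every $\delta>0$, \[ \omega_\varphi^2(f,\delta)_{w_{\alpha,\beta},q}\le c\,\omega_\varphi^2(f^q,\delta)_{w_{q\alpha,q\beta},1}^{1/q}, \] with $c$ independent of $f$ and $\delta$.
   Context: For $x\in[-1,1]$, $\varphi(x)=\sqrt{1-x^2}$, $w_{\alpha,\beta}(x)=(1+x)^\alpha(1-x)^\beta$. $\|g\|_{L_q(S)}$ is the $L_q$ norm over $S$; $\mathbb W_q^{\alpha,\beta}=\{f:\|w_{\alpha,\beta}f\|_{L_q[-1,1]}<\infty\}$. $\Delta_h^2(f,x)=f(x-h)-2f(x)+f(x+h)$ if $x\pm h\in[-1,1]$, else $0$; $\overrightarrow\Delta_h^2(f,x)=\Delta_h^2(f,x+h)$, $\overleftarrow\Delta_h^2(f,x)=\Delta_h^2(f,x-h)$. For a weight $w$: $\Omega_\varphi^2(f,\delta)_{w,q}=\sup_{0<h\le\delta}\|w(x)\Delta^2_{h\varphi(x)}(f,x)\|_{L_q[-1+8h^2,1-8h^2]}$, $\overrightarrow\Omega_\varphi^2(f,\delta)_{w,q}=\sup_{0<h\le8\delta^2}\|w\overrightarrow\Delta_h^2(f,\cdot)\|_{L_q[-1,-1+8\delta^2]}$, $\overleftarrow\Omega_\varphi^2(f,\delta)_{w,q}=\sup_{0<h\le8\delta^2}\|w\overleftarrow\Delta_h^2(f,\cdot)\|_{L_q[1-8\delta^2,1]}$,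 $\omega_\varphi^2=\Omega_\varphi^2+\overrightarrow\Omega_\varphi^2+\overleftarrow\Omega_\varphi^2$. $\mathbb M^2$ is the set of convex functions on $(-1,1)$ (all second divided differences nonnegative). *)

theory Defs
  imports "HOL-Analysis.Analysis"
begin

definition enn_powr :: "ennreal \<Rightarrow> real \<Rightarrow> ennreal" where
  "enn_powr t p = (if t = \<infinity> then \<infinity> else ennreal (enn2real t powr p))"

definition Lq_norm :: "real \<Rightarrow> real set \<Rightarrow> (real \<Rightarrow> real) \<Rightarrow> ennreal" where
  "Lq_norm q S g = enn_powr (\<integral>\<^sup>+ x. ennreal (\<bar>g x\<bar> powr q) * indicator S x \<partial>lborel) (1 / q)"

definition phi :: "real \<Rightarrow> real" where
  "phi x = sqrt (1 - x\<^sup>2)"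

definition wab :: "real \<Rightarrow> real \<Rightarrow> real \<Rightarrow> real" where
  "wab a b x = (1 + x) powr a * (1 - x) powr b"

definition Wq :: "real \<Rightarrow> real \<Rightarrow> real \<Rightarrow> (real \<Rightarrow> real) set" where
  "Wq q a b = {f. Lq_norm q {-1..1} (\<lambda>x. wab a b x * f x) < \<infinity>}"

definition Delta2 :: "(real \<Rightarrow> real) \<Rightarrow> real \<Rightarrow> real \<Rightarrow> real" where
  "Delta2 f h x = (if x - h \<in> {-1..1} \<and> x + h \<in> {-1..1}
                   then f (x - h) - 2 * f x + f (x + h) else 0)"

definition Delta2_fwd :: "(real \<Rightarrow> real) \<Rightarrow> real \<Rightarrow> real \<Rightarrow> real" where
  "Delta2_fwd f h x = Delta2 f h (x + h)"

definition Delta2_bwd :: "(real \<Rightarrow> real) \<Rightarrow> real \<Rightarrow> real \<Rightarrow> real" where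
  "Delta2_bwd f h x = Delta2 f h (x - h)"

definition Omega_main :: "(real \<Rightarrow> real) \<Rightarrow> real \<Rightarrow> (real \<Rightarrow> real) \<Rightarrow> real \<Rightarrow> ennreal" where
  "Omega_main f d w q = (SUP h\<in>{0<..d}.
      Lq_norm q {-1 + 8 * h\<^sup>2 .. 1 - 8 * h\<^sup>2} (\<lambda>x. w x * Delta2 f (h * phi x) x))"

definition Omega_fwd :: "(real \<Rightarrow> real) \<Rightarrow> real \<Rightarrow> (real \<Rightarrow> real) \<Rightarrow> real \<Rightarrow> ennreal" where
  "Omega_fwd f d w q = (SUP h\<in>{0<..8 * d\<^sup>2}.
      Lq_norm q {-1 .. -1 + 8 * d\<^sup>2} (\<lambda>x. w x * Delta2_fwd f h x))"

definition Omega_bwd :: "(real \<Rightarrow> real) \<Rightarrow> real \<Rightarrow> (real \<Rightarrow> real) \<Rightarrow> real \<Rightarrow> ennreal" where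
  "Omega_bwd f d w q = (SUP h\<in>{0<..8 * d\<^sup>2}.
      Lq_norm q {1 - 8 * d\<^sup>2 .. 1} (\<lambda>x. w x * Delta2_bwd f h x))"

definition omega_phi2 :: "(real \<Rightarrow> real) \<Rightarrow> real \<Rightarrow> (real \<Rightarrow> real) \<Rightarrow> real \<Rightarrow> ennreal" where
  "omega_phi2 f d w q = Omega_main f d w q + Omega_fwd f d w q + Omega_bwd f d w q"

end

theory Submission imports Defs begin

text \<open>For convex \<open>f \<ge> 0\<close> the second difference \<open>a - 2b + c\<close> of the values at three
  equally spaced nodes is nonnegative, and then \<open>(a - 2b + c)^q \<le> 2^(q-1) (a^q - 2b^q + c^q)\<close>,
  whose right side is the second difference of \<open>f^q\<close>. As \<open>w(q\<alpha>, q\<beta>) = w(\<alpha>, \<beta>)^q\<close>, the weighted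
  \<open>L_q\<close> integrand for \<open>f\<close> is thus pointwise bounded by \<open>2^(q-1)\<close> times the weighted \<open>L_1\<close>
  integrand for \<open>f^q\<close>, except at the finitely many points where a node hits \<open>\<plusminus>1\<close>. Taking
  \<open>q\<close>-th roots and suprema over the step bounds each of the three parts of the modulus, so
  \<open>c = 3 \<cdot> 2^(1 - 1/q)\<close> works.\<close>

lemma powr_add_le_powr_add:
  fixes u v q :: real
  assumes "0 \<le> u" "0 \<le> v" "1 \<le> q"
  shows "u powr q + v powr q \<le> (u + v) powr q"
proof -
  have powr_eq: "t powr q = t * t powr (q - 1)" if "0 \<le> t" for t :: real
    using that by (simp add: powr_mult_base)
  have "u powr q + v powr q = u * u powr (q - 1) + v * v powr (q - 1)"
    using assms powr_eq by simp
  also have "\<dots> \<le> u * (u + v) powr (q - 1) + v * (u + v) powr (q - 1)"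
    using assms by (intro add_mono mult_left_mono powr_mono2) auto
  also have "\<dots> = (u + v) powr q"
    using assms powr_eq[of "u + v"] by (simp add: algebra_simps)
  finally show ?thesis .
qed

lemma powr_convex_nonneg:
  fixes q :: real
  assumes "1 \<le> q"
  shows "convex_on {0..} (\<lambda>x. x powr q)"
proof (rule convex_onI)
  fix t x y :: real
  assume t: "0 < t" "t < 1" and xy: "x \<in> {0..}" "y \<in> {0..}"
  have shrink: "(s * z) powr q \<le> s * z powr q" if "0 \<le> s" "s \<le> 1" "0 \<le> z" for s z :: real
  proof -
    have "s powr q \<le> s"
      using that assms powr_le_one_le[of s q] by (cases "s = 0") auto
    then show ?thesis
      using that by (simp add: powr_mult mult_right_mono)
  qed
  show "((1 - t) *\<^sub>R x + t *\<^sub>R y) powr q \<le> (1 - t) * x powr q + t * y powr q"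
  proof (cases "x = 0 \<or> y = 0")
    case True
    then show ?thesis
      using shrink[of t y] shrink[of "1 - t" x] t xy by auto
  next
    case False
    then show ?thesis
      using xy t convex_onD[OF powr_convex[OF assms], of t x y] by auto
  qed
qed simp

lemma convex_on_powr_comp:
  fixes f :: "real \<Rightarrow> real" and q :: real
  assumes cv: "convex_on S f" and nonneg: "\<And>x. x \<in> S \<Longrightarrow> 0 \<le> f x" and q: "1 \<le> q"
  shows "convex_on S (\<lambda>x. f x powr q)"
proof (rule convex_onI)
  fix t x y :: real
  assume t: "0 < t" "t < 1" and xy: "x \<in> S" "y \<in> S"
  define z where "z = (1 - t) *\<^sub>R x + t *\<^sub>R y"
  have "z \<in> S"
    using convex_on_imp_convex[OF cv] xy t unfolding z_def by (simp add: convex_alt)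
  then have "f z powr q \<le> ((1 - t) * f x + t * f y) powr q"
    using convex_onD[OF cv, of t x y] nonneg xy t q unfolding z_def
    by (intro powr_mono2) auto
  also have "\<dots> \<le> (1 - t) * f x powr q + t * f y powr q"
    using convex_onD[OF powr_convex_nonneg[OF q], of t "f x" "f y"] nonneg xy t by auto
  finally show "f ((1 - t) *\<^sub>R x + t *\<^sub>R y) powr q \<le> (1 - t) * f x powr q + t * f y powr q"
    unfolding z_def .
qed (rule convex_on_imp_convex[OF cv])

lemma second_difference_powr_le:
  fixes a b c q :: real
  assumes "0 \<le> a" "0 \<le> b" "0 \<le> c" "2 * b \<le> a + c" "1 \<le> q"
  shows "(a - 2 * b + c) powr q \<le> 2 powr (q - 1) * (a powr q - 2 * b powr q + c powr q)"
proof -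
  define m where "m = (a + c) / 2"
  have "m powr q \<le> (a powr q + c powr q) / 2"
    using convex_onD[OF powr_convex_nonneg[OF assms(5)], of "1/2" a c] assms
    unfolding m_def by (simp add: field_simps)
  moreover have "(m - b) powr q + b powr q \<le> m powr q"
    using powr_add_le_powr_add[of "m - b" b q] assms unfolding m_def by simp
  ultimately have "2 * (m - b) powr q \<le> a powr q - 2 * b powr q + c powr q"
    by simp
  moreover have "(a - 2 * b + c) powr q = (2 * (m - b)) powr q"
    unfolding m_def by (rule arg_cong[where f = "\<lambda>z. z powr q"]) simp
  moreover have "\<dots> = 2 powr q * (m - b) powr q"
    using assms unfolding m_def by (subst powr_mult) simp_all
  moreover have "(2::real) powr q = 2 powr (q - 1) * 2"
    using powr_mult_base[of 2 "q - 1"] by simp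
  ultimately show ?thesis
    by simp
qed

text \<open>The nodes \<open>y \<plusminus> H\<close> must avoid the endpoints: convexity is only assumed on the open interval.\<close>

lemma Delta2_powr_le:
  fixes f :: "real \<Rightarrow> real" and q w H y :: real
  assumes cv: "convex_on {-1<..<1} f" and nonneg: "\<forall>x\<in>{-1..1}. 0 \<le> f x"
    and q: "1 \<le> q" and w: "0 \<le> w" and H: "0 \<le> H" "y - H \<noteq> -1" "y + H \<noteq> 1"
  shows "\<bar>w * Delta2 f H y\<bar> powr q
    \<le> 2 powr (q - 1) * \<bar>w powr q * Delta2 (\<lambda>x. f x powr q) H y\<bar>"
proof (cases "y - H \<in> {-1..1} \<and> y + H \<in> {-1..1}")
  case False
  then have "Delta2 f H y = 0" "Delta2 (\<lambda>x. f x powr q) H y = 0"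
    unfolding Delta2_def by auto
  then show ?thesis
    by simp
next
  case True
  then have nodes: "y - H \<in> {-1<..<1}" "y + H \<in> {-1<..<1}" "y \<in> {-1<..<1}"
    using H by auto
  define a b c where "a = f (y - H)" and "b = f y" and "c = f (y + H)"
  have abc: "0 \<le> a" "0 \<le> b" "0 \<le> c"
    using nonneg nodes unfolding a_def b_def c_def by auto
  have "f ((1 - 1/2) *\<^sub>R (y - H) + (1/2) *\<^sub>R (y + H)) \<le> (1 - 1/2) * f (y - H) + (1/2) * f (y + H)"
    using nodes by (intro convex_onD[OF cv]) auto
  then have mid: "2 * b \<le> a + c"
    unfolding a_def b_def c_def by (simp add: field_simps)
  have key: "(a - 2 * b + c) powr q \<le> 2 powr (q - 1) * (a powr q - 2 * b powr q + c powr q)"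
    using second_difference_powr_le[OF abc mid q] .
  then have "0 \<le> 2 powr (q - 1) * (a powr q - 2 * b powr q + c powr q)"
    using powr_ge_zero order_trans by blast
  then have "0 \<le> a powr q - 2 * b powr q + c powr q"
    by (simp add: zero_le_mult_iff)
  moreover have "\<bar>w * (a - 2 * b + c)\<bar> powr q = w powr q * (a - 2 * b + c) powr q"
    using w mid by (simp add: powr_mult)
  ultimately have "\<bar>w * (a - 2 * b + c)\<bar> powr q
      \<le> 2 powr (q - 1) * \<bar>w powr q * (a powr q - 2 * b powr q + c powr q)\<bar>"
    using mult_left_mono[OF key, of "w powr q"] by (simp add: mult.left_commute)
  then show ?thesis
    using True unfolding Delta2_def a_def b_def c_def by simp
qed

text \<open>No measurability is needed: scaling by \<open>1 / c\<close> is a bijection between the simple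
  functions below \<open>c * f\<close> and those below \<open>f\<close>.\<close>

lemma nn_integral_cmult_le:
  fixes c :: real
  assumes "0 < c"
  shows "(\<integral>\<^sup>+x. ennreal c * f x \<partial>M) \<le> ennreal c * integral\<^sup>N M f"
  unfolding nn_integral_def[of M "\<lambda>x. ennreal c * f x"]
proof (rule SUP_least)
  fix g assume g: "g \<in> {g. simple_function M g \<and> g \<le> (\<lambda>x. ennreal c * f x)}"
  define g' where "g' x = ennreal (1 / c) * g x" for x
  have inv: "ennreal (1 / c) * ennreal c = 1"
    using assms by (simp flip: ennreal_mult)
  have simple: "simple_function M g'"
    using g unfolding g'_def by auto
  have "g' \<le> f"
  proof (rule le_funI)
    fix x
    have "ennreal (1 / c) * g x \<le> ennreal (1 / c) * (ennreal c * f x)"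
      using g by (intro mult_left_mono) (auto simp: le_fun_def)
    then show "g' x \<le> f x"
      using inv by (simp add: g'_def mult.assoc[symmetric])
  qed
  have "g = (\<lambda>x. ennreal c * g' x)"
    using inv by (auto simp: g'_def mult.assoc[symmetric] mult.commute[of "ennreal c"])
  then have "integral\<^sup>S M g = ennreal c * integral\<^sup>S M g'"
    using simple by (simp add: simple_integral_mult)
  also have "\<dots> \<le> ennreal c * integral\<^sup>N M f"
    unfolding nn_integral_def using simple \<open>g' \<le> f\<close> by (intro mult_left_mono SUP_upper) auto
  finally show "integral\<^sup>S M g \<le> ennreal c * integral\<^sup>N M f" .
qed

lemma enn_powr_less_top_iff: "enn_powr t p < top \<longleftrightarrow> t < top"
  by (simp add: enn_powr_def flip: less_top)

lemma enn_powr_one: "enn_powr t 1 = t"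
  by (cases "t = \<infinity>") (auto simp: enn_powr_def ennreal_enn2real_if)

lemma enn_powr_mono:
  assumes "s \<le> t" "0 < p"
  shows "enn_powr s p \<le> enn_powr t p"
proof (cases "t = \<infinity>")
  case False
  then have "s \<noteq> \<infinity>"
    using assms top.extremum_unique by auto
  with False assms have "enn2real s powr p \<le> enn2real t powr p"
    by (intro powr_mono2 enn2real_mono) (auto simp: less_top)
  then show ?thesis
    using False \<open>s \<noteq> \<infinity>\<close> by (simp add: enn_powr_def ennreal_leI)
qed (simp add: enn_powr_def)

lemma enn_powr_cmult:
  fixes K :: real
  assumes "0 < K" "0 < p"
  shows "enn_powr (ennreal K * t) p = ennreal (K powr p) * enn_powr t p"
proof (cases "t = \<infinity>")
  case True
  then show ?thesis
    using assms by (simp add: enn_powr_def ennreal_mult_top)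
next
  case False
  then have "ennreal K * t \<noteq> \<infinity>"
    by (simp add: ennreal_mult_eq_top_iff)
  moreover have "enn2real (ennreal K * t) = K * enn2real t"
    using assms by (simp add: enn2real_mult)
  ultimately show ?thesis
    using False assms by (simp add: enn_powr_def powr_mult ennreal_mult[symmetric])
qed

lemma enn_powr_add3_le:
  assumes "0 < p"
  shows "enn_powr a p + enn_powr b p + enn_powr c p \<le> 3 * enn_powr (a + b + c) p"
proof -
  have "enn_powr a p \<le> enn_powr (a + b + c) p" "enn_powr b p \<le> enn_powr (a + b + c) p"
    "enn_powr c p \<le> enn_powr (a + b + c) p"
    by (intro enn_powr_mono[OF _ assms]; simp add: add_ac)+
  then have "enn_powr a p + enn_powr b p + enn_powr c p
      \<le> enn_powr (a + b + c) p + enn_powr (a + b + c) p + enn_powr (a + b + c) p"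
    by (intro add_mono)
  also have "\<dots> = (1 + 1 + 1) * enn_powr (a + b + c) p"
    by (simp only: distrib_right mult_1)
  also have "\<dots> = 3 * enn_powr (a + b + c) p"
    by simp
  finally show ?thesis .
qed

lemma Lq_norm_le_if_AE_powr_le:
  fixes K q :: real
  assumes q: "0 < q" and K: "0 < K"
    and bound: "AE x in lborel. x \<in> S \<longrightarrow> \<bar>g x\<bar> powr q \<le> K * \<bar>g' x\<bar>"
  shows "Lq_norm q S g \<le> ennreal (K powr (1 / q)) * enn_powr (Lq_norm 1 S g') (1 / q)"
proof -
  have "(\<integral>\<^sup>+x. ennreal (\<bar>g x\<bar> powr q) * indicator S x \<partial>lborel)
      \<le> (\<integral>\<^sup>+x. ennreal K * (ennreal \<bar>g' x\<bar> * indicator S x) \<partial>lborel)"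
    using bound K by (intro nn_integral_mono_AE)
      (auto elim!: eventually_mono intro!: ennreal_leI
        simp: ennreal_mult[symmetric] split: split_indicator)
  also have "\<dots> \<le> ennreal K * Lq_norm 1 S g'"
    unfolding Lq_norm_def using K by (simp add: enn_powr_one nn_integral_cmult_le)
  finally have "Lq_norm q S g \<le> enn_powr (ennreal K * Lq_norm 1 S g') (1 / q)"
    unfolding Lq_norm_def using q by (intro enn_powr_mono) auto
  also have "\<dots> = ennreal (K powr (1 / q)) * enn_powr (Lq_norm 1 S g') (1 / q)"
    using K q by (intro enn_powr_cmult) auto
  finally show ?thesis .
qed

lemma wab_powr: "wab (q * a) (q * b) x = wab a b x powr q"
  unfolding wab_def by (simp add: powr_mult powr_powr mult.commute)

lemma wab_nonneg: "0 \<le> wab a b x"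
  unfolding wab_def by simp

lemma powr_in_Wq_one:
  fixes f :: "real \<Rightarrow> real"
  assumes nonneg: "\<forall>x\<in>{-1..1}. 0 \<le> f x" and f: "f \<in> Wq q a b"
  shows "(\<lambda>x. f x powr q) \<in> Wq 1 (q * a) (q * b)"
proof -
  have "(\<integral>\<^sup>+x. ennreal \<bar>wab (q * a) (q * b) x * f x powr q\<bar> * indicator {-1..1} x \<partial>lborel)
      = (\<integral>\<^sup>+x. ennreal (\<bar>wab a b x * f x\<bar> powr q) * indicator {-1..1} x \<partial>lborel)"
    using nonneg by (intro nn_integral_cong)
      (auto simp: wab_powr wab_nonneg powr_mult split: split_indicator)
  then show ?thesis
    using f unfolding Wq_def Lq_norm_def by (simp add: enn_powr_one enn_powr_less_top_iff)
qed

lemma Lq_norm_Delta2_powr_le: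
  fixes f H Y :: "real \<Rightarrow> real" and q a b :: real
  assumes q: "1 < q" and cv: "convex_on {-1<..<1} f" and nonneg: "\<forall>x\<in>{-1..1}. 0 \<le> f x"
    and step_nonneg: "\<And>x. x \<in> S \<Longrightarrow> 0 \<le> H x"
    and E: "finite E" "\<And>x. x \<in> S \<Longrightarrow> x \<notin> E \<Longrightarrow> Y x - H x \<noteq> -1 \<and> Y x + H x \<noteq> 1"
  shows "Lq_norm q S (\<lambda>x. wab a b x * Delta2 f (H x) (Y x))
    \<le> ennreal (2 powr (1 - 1 / q)) *
      enn_powr (Lq_norm 1 S (\<lambda>x. wab (q * a) (q * b) x * Delta2 (\<lambda>x. f x powr q) (H x) (Y x))) (1 / q)"
proof -
  have "\<bar>wab a b x * Delta2 f (H x) (Y x)\<bar> powr q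
      \<le> 2 powr (q - 1) * \<bar>wab (q * a) (q * b) x * Delta2 (\<lambda>x. f x powr q) (H x) (Y x)\<bar>"
    if "x \<in> S" "x \<notin> E" for x
    using Delta2_powr_le[OF cv nonneg _ wab_nonneg, of q "H x" "Y x"] step_nonneg E q that
    by (simp add: wab_powr)
  then have "AE x in lborel. x \<in> S \<longrightarrow> \<bar>wab a b x * Delta2 f (H x) (Y x)\<bar> powr q
      \<le> 2 powr (q - 1) * \<bar>wab (q * a) (q * b) x * Delta2 (\<lambda>x. f x powr q) (H x) (Y x)\<bar>"
    by (intro AE_I'[OF finite_imp_null_set_lborel[OF E(1)]]) auto
  from Lq_norm_le_if_AE_powr_le[OF _ _ this] q
  show ?thesis
    by (simp add: powr_powr diff_divide_distrib)
qed

lemma SUP_le_cmult_enn_powr_SUP: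
  assumes p: "0 < p" and le: "\<And>i. i \<in> I \<Longrightarrow> A i \<le> c * enn_powr (B i) p"
  shows "(SUP i\<in>I. A i) \<le> c * enn_powr (SUP i\<in>I. B i) p"
proof (rule SUP_least)
  fix i assume "i \<in> I"
  then have "A i \<le> c * enn_powr (B i) p"
    by (rule le)
  also have "\<dots> \<le> c * enn_powr (SUP i\<in>I. B i) p"
    using \<open>i \<in> I\<close> p by (intro mult_left_mono enn_powr_mono SUP_upper) auto
  finally show "A i \<le> c * enn_powr (SUP i\<in>I. B i) p" .
qed

lemma Omega_fwd_powr_le:
  fixes q a b \<delta> :: real
  assumes q: "1 < q" and cv: "convex_on {-1<..<1} f" and nonneg: "\<forall>x\<in>{-1..1}. 0 \<le> f x"
  shows "Omega_fwd f \<delta> (wab a b) q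
    \<le> ennreal (2 powr (1 - 1 / q)) * enn_powr (Omega_fwd (\<lambda>x. f x powr q) \<delta> (wab (q * a) (q * b)) 1) (1 / q)"
  unfolding Omega_fwd_def Delta2_fwd_def
  using q
  apply (intro SUP_le_cmult_enn_powr_SUP)
   apply simp
  subgoal for h
    by (rule Lq_norm_Delta2_powr_le[OF q cv nonneg, where H = "\<lambda>_. h" and E = "{-1, 1 - 2 * h}"]) auto
  done

lemma Omega_bwd_powr_le:
  fixes q a b \<delta> :: real
  assumes q: "1 < q" and cv: "convex_on {-1<..<1} f" and nonneg: "\<forall>x\<in>{-1..1}. 0 \<le> f x"
  shows "Omega_bwd f \<delta> (wab a b) q
    \<le> ennreal (2 powr (1 - 1 / q)) * enn_powr (Omega_bwd (\<lambda>x. f x powr q) \<delta> (wab (q * a) (q * b)) 1) (1 / q)"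
  unfolding Omega_bwd_def Delta2_bwd_def
  using q
  apply (intro SUP_le_cmult_enn_powr_SUP)
   apply simp
  subgoal for h
    by (rule Lq_norm_Delta2_powr_le[OF q cv nonneg, where H = "\<lambda>_. h" and E = "{1, 2 * h - 1}"]) auto
  done

lemma phi_minus: "phi (- x) = phi x"
  by (simp add: phi_def)

lemma phi_step_eq_minus_one:
  fixes h x :: real
  assumes "x \<in> {-1..1}" "x - h * phi x = -1"
  shows "x = -1 \<or> x = (h\<^sup>2 - 1) / (h\<^sup>2 + 1)"
proof -
  have "(phi x)\<^sup>2 = 1 - x\<^sup>2"
    using assms(1) by (simp add: phi_def abs_square_le_1 abs_le_iff)
  moreover have "x + 1 = h * phi x"
    using assms(2) by simp
  then have "(x + 1)\<^sup>2 = h\<^sup>2 * (phi x)\<^sup>2"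
    by (simp add: power_mult_distrib)
  ultimately have "(x + 1)\<^sup>2 = h\<^sup>2 * (1 - x\<^sup>2)"
    by simp
  then have "(x + 1) * ((h\<^sup>2 + 1) * x - (h\<^sup>2 - 1)) = 0"
    by (simp add: algebra_simps power2_eq_square)
  then have "x + 1 = 0 \<or> (h\<^sup>2 + 1) * x - (h\<^sup>2 - 1) = 0"
    by (simp only: mult_eq_0_iff)
  moreover have "h\<^sup>2 + 1 \<noteq> 0"
    by (simp add: add_nonneg_eq_0_iff)
  ultimately show ?thesis
    by (auto simp: eq_divide_eq algebra_simps)
qed

lemma phi_step_eq_one:
  fixes h x :: real
  assumes "x \<in> {-1..1}" "x + h * phi x = 1"
  shows "x = 1 \<or> x = (1 - h\<^sup>2) / (h\<^sup>2 + 1)"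
proof -
  have "(h\<^sup>2 - 1) / (h\<^sup>2 + 1) = - ((1 - h\<^sup>2) / (h\<^sup>2 + 1))"
    by (simp add: minus_divide_left)
  then show ?thesis
    using phi_step_eq_minus_one[of "- x" h] assms by (auto simp: phi_minus)
qed

lemma Omega_main_powr_le:
  fixes q a b \<delta> :: real
  assumes q: "1 < q" and cv: "convex_on {-1<..<1} f" and nonneg: "\<forall>x\<in>{-1..1}. 0 \<le> f x"
  shows "Omega_main f \<delta> (wab a b) q
    \<le> ennreal (2 powr (1 - 1 / q)) * enn_powr (Omega_main (\<lambda>x. f x powr q) \<delta> (wab (q * a) (q * b)) 1) (1 / q)"
  unfolding Omega_main_def
proof (rule SUP_le_cmult_enn_powr_SUP)
  fix h :: real
  let ?S = "{-1 + 8 * h\<^sup>2 .. 1 - 8 * h\<^sup>2}"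
  have S: "x \<in> {-1..1}" if "x \<in> ?S" for x
    using that zero_le_power2[of h] by (simp only: atLeastAtMost_iff) linarith
  show "Lq_norm q ?S (\<lambda>x. wab a b x * Delta2 f (h * phi x) x)
    \<le> ennreal (2 powr (1 - 1 / q)) * enn_powr (Lq_norm 1 ?S
        (\<lambda>x. wab (q * a) (q * b) x * Delta2 (\<lambda>x. f x powr q) (h * phi x) x)) (1 / q)"
    if "h \<in> {0<..\<delta>}"
  proof (rule Lq_norm_Delta2_powr_le[OF q cv nonneg, where Y = "\<lambda>x. x"
        and E = "{-1, 1, (h\<^sup>2 - 1) / (h\<^sup>2 + 1), (1 - h\<^sup>2) / (h\<^sup>2 + 1)}"])
    show "0 \<le> h * phi x" if "x \<in> ?S" for x
      using \<open>h \<in> {0<..\<delta>}\<close> S[OF that] by (simp add: phi_def abs_square_le_1 abs_le_iff)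
  qed (use S phi_step_eq_minus_one phi_step_eq_one in fastforce)+
qed (use q in simp)

lemma omega_phi2_powr_le:
  fixes q a b \<delta> :: real
  assumes q: "1 < q" and cv: "convex_on {-1<..<1} f" and nonneg: "\<forall>x\<in>{-1..1}. 0 \<le> f x"
  shows "omega_phi2 f \<delta> (wab a b) q
    \<le> ennreal (3 * 2 powr (1 - 1 / q)) * enn_powr (omega_phi2 (\<lambda>x. f x powr q) \<delta> (wab (q * a) (q * b)) 1) (1 / q)"
proof -
  define K where "K = 2 powr (1 - 1 / q)"
  let ?g = "\<lambda>x. f x powr q" and ?w = "wab (q * a) (q * b)"
  have "omega_phi2 f \<delta> (wab a b) q
      \<le> ennreal K * enn_powr (Omega_main ?g \<delta> ?w 1) (1 / q)
        + ennreal K * enn_powr (Omega_fwd ?g \<delta> ?w 1) (1 / q)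
        + ennreal K * enn_powr (Omega_bwd ?g \<delta> ?w 1) (1 / q)"
    unfolding omega_phi2_def K_def
    using Omega_main_powr_le[OF q cv nonneg] Omega_fwd_powr_le[OF q cv nonneg]
      Omega_bwd_powr_le[OF q cv nonneg]
    by (intro add_mono)
  also have "\<dots> \<le> ennreal K * (3 * enn_powr (omega_phi2 ?g \<delta> ?w 1) (1 / q))"
    unfolding omega_phi2_def distrib_left[symmetric]
    using q by (intro mult_left_mono enn_powr_add3_le) auto
  also have "\<dots> = ennreal (3 * K) * enn_powr (omega_phi2 ?g \<delta> ?w 1) (1 / q)"
    by (simp add: K_def ennreal_mult mult_ac)
  finally show ?thesis
    by (simp add: K_def)
qed

theorem lemma4p5:
  fixes q \<alpha> \<beta> :: real
  assumes "1 < q"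
  shows "\<exists>c :: real. \<forall>f :: real \<Rightarrow> real.
           convex_on {-1<..<1} f \<and> (\<forall>x\<in>{-1..1}. 0 \<le> f x) \<and> f \<in> Wq q \<alpha> \<beta> \<longrightarrow>
             convex_on {-1<..<1} (\<lambda>x. f x powr q) \<and>
             (\<lambda>x. f x powr q) \<in> Wq 1 (q * \<alpha>) (q * \<beta>) \<and>
             (\<forall>\<delta>>0. omega_phi2 f \<delta> (wab \<alpha> \<beta>) q
                \<le> ennreal c * enn_powr (omega_phi2 (\<lambda>x. f x powr q) \<delta> (wab (q * \<alpha>) (q * \<beta>)) 1) (1 / q))"
proof (intro exI[of _ "3 * 2 powr (1 - 1 / q)"] allI impI conjI)
  fix f :: "real \<Rightarrow> real" and \<delta> :: real
  assume "convex_on {-1<..<1} f \<and> (\<forall>x\<in>{-1..1}. 0 \<le> f x) \<and> f \<in> Wq q \<alpha> \<beta>"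
  then have cv: "convex_on {-1<..<1} f" and nonneg: "\<forall>x\<in>{-1..1}. 0 \<le> f x"
    and f_W: "f \<in> Wq q \<alpha> \<beta>"
    by auto
  show "convex_on {-1<..<1} (\<lambda>x. f x powr q)"
    using convex_on_powr_comp[OF cv] nonneg assms by auto
  show "(\<lambda>x. f x powr q) \<in> Wq 1 (q * \<alpha>) (q * \<beta>)"
    using powr_in_Wq_one[OF nonneg f_W] .
  show "omega_phi2 f \<delta> (wab \<alpha> \<beta>) q
      \<le> ennreal (3 * 2 powr (1 - 1 / q)) *
        enn_powr (omega_phi2 (\<lambda>x. f x powr q) \<delta> (wab (q * \<alpha>) (q * \<beta>)) 1) (1 / q)"
    using omega_phi2_powr_le[OF assms cv nonneg] .
qed

end
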